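(* Let $k$ be a field, $G$ an ordered abelian group, and $K=k((G))$ the generalized power series field with its canonical valuation $v$. Let $D$ be a derivation on $K$ whose field of constants $\{a\in K\mid Da=0\}$ is $k$ (embedded as the constant series), and suppose $v$ is a differential valuation with respect to $D$. Then $(K,D)$ admits integration if and only if it admits asymptotic integration.
   Context: For a field $k$ and ordered abelian group $G$, $k((G))$ is the field of formal sums $a=\sum_{g\in G}c_gt^g$ with $c_g\in k$ and well-ordered support $\mathrm{supp}(a)=\{g\mid c_g\neq0\}$; its canonical valuation is $va=\min\mathrm{supp}(a)$, $v0=\infty$. A derivation $D$ on a field $K$ is an additive map with $D(ab)=aDb+bDa$; its field of constants is $C=\{a\in K\mid Da=0\}$. A valuation $v$ of $K$ is a differential valuation (for $D$) if $v$ is trivial on $C$ and for all $a,b\in K$ with $va\ge0$, $vb>0$, $b\ne0$ one has $v\!\left(\frac{b\,Da}{Db}\right)>0$. $(K,D)$ admits integration if $D:K\to K$ is surjective; it admits asymptotic integration if for every $b\in K\setminus\{0\}$ there is $a\in K$ with $v(b-Da)>vb$. *)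

theory Defs
  imports Main "HOL-Library.Extended"
begin

text \<open>Generalized power series field k((G)): formal sums represented as coefficient
functions G \<Rightarrow> k with well-ordered support. The field is the carrier set hahn_field.\<close>

definition hsupp :: "('g \<Rightarrow> 'k::zero) \<Rightarrow> 'g set" where
  "hsupp a = {g. a g \<noteq> 0}"

definition well_ordered_set :: "'g::linorder set \<Rightarrow> bool" where
  "well_ordered_set S \<longleftrightarrow> (\<forall>T \<subseteq> S. T \<noteq> {} \<longrightarrow> (\<exists>m\<in>T. \<forall>t\<in>T. m \<le> t))"

definition hahn_field :: "('g::linordered_ab_group_add \<Rightarrow> 'k::field) set" where
  "hahn_field = {a. well_ordered_set (hsupp a)}"

definition hzero :: "'g \<Rightarrow> 'k::field" where
  "hzero = (\<lambda>g. 0)"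

definition hconst :: "'k::field \<Rightarrow> ('g::linordered_ab_group_add \<Rightarrow> 'k)" where
  "hconst c = (\<lambda>g. if g = 0 then c else 0)"

definition hone :: "'g::linordered_ab_group_add \<Rightarrow> 'k::field" where
  "hone = hconst 1"

definition hadd :: "('g \<Rightarrow> 'k::field) \<Rightarrow> ('g \<Rightarrow> 'k) \<Rightarrow> ('g \<Rightarrow> 'k)" where
  "hadd a b = (\<lambda>g. a g + b g)"

definition hsub :: "('g \<Rightarrow> 'k::field) \<Rightarrow> ('g \<Rightarrow> 'k) \<Rightarrow> ('g \<Rightarrow> 'k)" where
  "hsub a b = (\<lambda>g. a g - b g)"

text \<open>Cauchy product; for series with well-ordered support the index set is finite.\<close>
definition hmult :: "('g::linordered_ab_group_add \<Rightarrow> 'k::field) \<Rightarrow> ('g \<Rightarrow> 'k) \<Rightarrow> ('g \<Rightarrow> 'k)" where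
  "hmult a b = (\<lambda>x. \<Sum>g\<in>{g. a g \<noteq> 0 \<and> b (x - g) \<noteq> 0}. a g * b (x - g))"

definition hinverse :: "('g::linordered_ab_group_add \<Rightarrow> 'k::field) \<Rightarrow> ('g \<Rightarrow> 'k)" where
  "hinverse a = (THE c. c \<in> hahn_field \<and> hmult a c = hone)"

definition hdivide :: "('g::linordered_ab_group_add \<Rightarrow> 'k::field) \<Rightarrow> ('g \<Rightarrow> 'k) \<Rightarrow> ('g \<Rightarrow> 'k)" where
  "hdivide a b = hmult a (hinverse b)"

definition hval :: "('g::linordered_ab_group_add \<Rightarrow> 'k::field) \<Rightarrow> 'g extended" where
  "hval a = (if a = hzero then Pinf else Fin (LEAST g. a g \<noteq> 0))"

definition is_derivation :: "(('g::linordered_ab_group_add \<Rightarrow> 'k::field) \<Rightarrow> ('g \<Rightarrow> 'k)) \<Rightarrow> bool" where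
  "is_derivation D \<longleftrightarrow>
     (\<forall>a\<in>hahn_field. D a \<in> hahn_field) \<and>
     (\<forall>a\<in>hahn_field. \<forall>b\<in>hahn_field. D (hadd a b) = hadd (D a) (D b)) \<and>
     (\<forall>a\<in>hahn_field. \<forall>b\<in>hahn_field. D (hmult a b) = hadd (hmult a (D b)) (hmult b (D a)))"

definition constants :: "(('g::linordered_ab_group_add \<Rightarrow> 'k::field) \<Rightarrow> ('g \<Rightarrow> 'k)) \<Rightarrow> ('g \<Rightarrow> 'k) set" where
  "constants D = {a \<in> hahn_field. D a = hzero}"

definition differential_valuation :: "(('g::linordered_ab_group_add \<Rightarrow> 'k::field) \<Rightarrow> ('g \<Rightarrow> 'k)) \<Rightarrow> bool" where
  "differential_valuation D \<longleftrightarrow>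
     (\<forall>c\<in>constants D. c \<noteq> hzero \<longrightarrow> hval c = Fin 0) \<and>
     (\<forall>a\<in>hahn_field. \<forall>b\<in>hahn_field.
        hval a \<ge> Fin 0 \<longrightarrow> hval b > Fin 0 \<longrightarrow> b \<noteq> hzero \<longrightarrow>
        hval (hdivide (hmult b (D a)) (D b)) > Fin 0)"

definition admits_integration :: "(('g::linordered_ab_group_add \<Rightarrow> 'k::field) \<Rightarrow> ('g \<Rightarrow> 'k)) \<Rightarrow> bool" where
  "admits_integration D \<longleftrightarrow> (\<forall>b\<in>hahn_field. \<exists>a\<in>hahn_field. D a = b)"

definition admits_asymptotic_integration :: "(('g::linordered_ab_group_add \<Rightarrow> 'k::field) \<Rightarrow> ('g \<Rightarrow> 'k)) \<Rightarrow> bool" where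
  "admits_asymptotic_integration D \<longleftrightarrow>
     (\<forall>b\<in>hahn_field. b \<noteq> hzero \<longrightarrow> (\<exists>a\<in>hahn_field. hval (hsub b (D a)) > hval b))"

end

theory Submission
  imports Defs "HOL-Library.Set_Algebras" Complex_Main
begin

text \<open>Integration trivially gives asymptotic integration. Conversely, the differential valuation
  axiom, applied to \<open>a\<close> or to \<open>1/a\<close>, shows that for \<open>v a = \<gamma> \<noteq> 0\<close> the valuation of \<open>D a\<close> depends
  only on \<open>\<gamma>\<close>, through a strictly increasing map \<open>dval\<close> on \<open>G - {0}\<close>; asymptotic integration makes
  it surjective. Hence an approximate integral \<open>a\<close> of \<open>b\<close> with \<open>v (b - D a) = q\<close> can be corrected
  by some \<open>f\<close> with \<open>v f = dval\<^sup>-\<^sup>1 q\<close> so that \<open>v (b - D (a + f)) > q\<close>. Since the valuations of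
  successive corrections strictly increase, any chain of such approximations has a limit in
  \<open>k((G))\<close> (coefficients stabilise), and Zorn's lemma yields an exact integral. The same
  successive-approximation scheme, applied to \<open>1 - y c\<close>, provides inverses in \<open>k((G))\<close>.\<close>

section \<open>Well-ordered sets\<close>

lemma well_ordered_set_iff_wfp_on: "well_ordered_set (S::'a::linorder set) \<longleftrightarrow> wfp_on S (<)"
proof -
  have "(\<forall>t\<in>T. m \<le> t) \<longleftrightarrow> (\<forall>y. y < m \<longrightarrow> y \<notin> T)" for T and m :: 'a
    using not_less by blast
  then show ?thesis
    unfolding well_ordered_set_def wfp_on_iff_ex_minimal by (simp only:)
qed

lemma well_ordered_set_iff_no_descending_chain:
  "well_ordered_set (S::'a::linorder set) \<longleftrightarrow> (\<nexists>f. \<forall>i. f i \<in> S \<and> f (Suc i) < f i)"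
proof -
  have chain: "(\<forall>i. (f (Suc i), f i) \<in> {(x, y). x < y \<and> x \<in> S \<and> y \<in> S})
      \<longleftrightarrow> (\<forall>i. f i \<in> S \<and> f (Suc i) < f i)" for f :: "nat \<Rightarrow> 'a"
    by auto
  have "well_ordered_set S \<longleftrightarrow> wfp (\<lambda>x y. x < y \<and> x \<in> S \<and> y \<in> S)"
    by (rule trans[OF well_ordered_set_iff_wfp_on wfp_on_iff_wfp])
  also have "\<dots> \<longleftrightarrow> wf {(x, y). x < y \<and> x \<in> S \<and> y \<in> S}"
    by (rule wfp_def)
  finally show ?thesis
    unfolding wf_iff_no_infinite_down_chain chain .
qed

lemma well_ordered_set_subset: "well_ordered_set S \<Longrightarrow> T \<subseteq> S \<Longrightarrow> well_ordered_set T"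
  unfolding well_ordered_set_iff_wfp_on by (rule wfp_on_subset)

lemma well_ordered_set_finite: "finite (S::'a::linorder set) \<Longrightarrow> well_ordered_set S"
  unfolding well_ordered_set_iff_wfp_on
  by (rule strict_partial_order_wfp_on_finite_set) (auto intro: transp_onI asymp_onI)

lemma well_ordered_set_Un:
  assumes A: "well_ordered_set (A::'a::linorder set)" and B: "well_ordered_set B"
  shows "well_ordered_set (A \<union> B)"
  unfolding well_ordered_set_def
proof (intro allI impI)
  fix T assume T: "T \<subseteq> A \<union> B" "T \<noteq> {}"
  consider "T \<subseteq> A" | "T \<subseteq> B" | "T \<inter> A \<noteq> {}" "T \<inter> B \<noteq> {}"
    using T(1) by blast
  then show "\<exists>m\<in>T. \<forall>t\<in>T. m \<le> t"
  proof cases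
    case 3
    then obtain a b where a: "a \<in> T" "\<forall>t\<in>T \<inter> A. a \<le> t" and b: "b \<in> T" "\<forall>t\<in>T \<inter> B. b \<le> t"
      using A B unfolding well_ordered_set_def by (metis IntE inf_le2)
    have "min a b \<le> t" if "t \<in> T" for t
      using that T(1) a(2) b(2) by (auto simp: min_le_iff_disj)
    then show ?thesis using a(1) b(1) by (intro bexI[of _ "min a b"]) (auto simp: min_def)
  qed (use A B T(2) in \<open>auto simp: well_ordered_set_def\<close>)
qed

lemma well_ordered_set_if_initial_segments:
  assumes "\<And>t. t \<in> S \<Longrightarrow> well_ordered_set {s \<in> S. s \<le> t}"
  shows "well_ordered_set (S::'a::linorder set)"
  unfolding well_ordered_set_def
proof (intro allI impI)
  fix T assume T: "T \<subseteq> S" "T \<noteq> {}"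
  then obtain t where t: "t \<in> T" by blast
  have "{s \<in> T. s \<le> t} \<subseteq> {s \<in> S. s \<le> t}" "{s \<in> T. s \<le> t} \<noteq> {}"
    using T(1) t by auto
  then have "\<exists>m\<in>{s \<in> T. s \<le> t}. \<forall>s\<in>{s \<in> T. s \<le> t}. m \<le> s"
    using assms[of t] T(1) t unfolding well_ordered_set_def by blast
  then obtain m where m: "m \<in> T" "m \<le> t" "\<And>s. s \<in> T \<Longrightarrow> s \<le> t \<Longrightarrow> m \<le> s" by blast
  have "m \<le> s" if "s \<in> T" for s
    using m(2,3) that by (cases "s \<le> t") auto
  then show "\<exists>m\<in>T. \<forall>s\<in>T. m \<le> s" using m(1) by blast
qed

lemma well_ordered_set_incseq_subseq:
  fixes s :: "nat \<Rightarrow> 'a::linorder"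
  assumes wo: "well_ordered_set A" and s: "\<And>i. s i \<in> A"
  obtains \<sigma> where "strict_mono \<sigma>" "incseq (s \<circ> \<sigma>)"
proof -
  obtain f where f: "strict_mono f" "monoseq (s \<circ> f)"
    using seq_monosub[of s] by (auto simp: o_def)
  show ?thesis
  proof (cases "incseq (s \<circ> f)")
    case True
    with f(1) that show ?thesis by blast
  next
    case False
    with f(2) have dec: "decseq (s \<circ> f)" by (simp add: monoseq_iff)
    have "range (s \<circ> f) \<subseteq> A" using s by auto
    then obtain j where j: "\<And>n. s (f j) \<le> s (f n)"
      using wo[unfolded well_ordered_set_def, rule_format, of "range (s \<circ> f)"] by auto
    \<comment> \<open>a decreasing sequence in a well-ordered set is eventually constant\<close>
    have "s (f (n + j)) = s (f j)" for n
      using j[of "n + j"] decseqD[OF dec, of j "n + j"] by simp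
    then have "incseq (s \<circ> (\<lambda>n. f (n + j)))" by (simp add: incseq_def)
    moreover have "strict_mono (\<lambda>n. f (n + j))" using f(1) by (simp add: strict_mono_def)
    ultimately show ?thesis using that by blast
  qed
qed

lemma well_ordered_set_plus:
  fixes A B :: "'g::linordered_ab_group_add set"
  assumes A: "well_ordered_set A" and B: "well_ordered_set B"
  shows "well_ordered_set (A + B)"
  unfolding well_ordered_set_iff_no_descending_chain
proof
  assume "\<exists>f. \<forall>i. f i \<in> A + B \<and> f (Suc i) < f i"
  then obtain f where f: "\<And>i. f i \<in> A + B" "\<And>i. f (Suc i) < f i" by blast
  have "\<forall>i. \<exists>x. x \<in> A \<and> (\<exists>y. y \<in> B \<and> f i = x + y)"
    using f(1) unfolding set_plus_def by blast
  from choice[OF this] obtain a where a: "\<And>i. a i \<in> A" and "\<forall>i. \<exists>y. y \<in> B \<and> f i = a i + y"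
    by blast
  from choice[OF this(2)] obtain b where b: "\<And>i. b i \<in> B" and fab: "\<And>i. f i = a i + b i"
    by blast
  obtain \<sigma> where \<sigma>: "strict_mono \<sigma>" "incseq (a \<circ> \<sigma>)"
    by (rule well_ordered_set_incseq_subseq[OF A a])
  have "b (\<sigma> (Suc i)) < b (\<sigma> i)" for i
  proof (rule ccontr)
    assume "\<not> b (\<sigma> (Suc i)) < b (\<sigma> i)"
    moreover have "a (\<sigma> i) \<le> a (\<sigma> (Suc i))" using incseq_SucD[OF \<sigma>(2)] by simp
    ultimately have "f (\<sigma> i) \<le> f (\<sigma> (Suc i))" unfolding fab by (simp add: add_mono)
    moreover have "f (\<sigma> (Suc i)) \<le> f (Suc (\<sigma> i))"
      using lift_Suc_antimono_le[of f, OF less_imp_le[OF f(2)]] \<sigma>(1)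
      by (simp add: Suc_leI strict_mono_Suc_iff)
    ultimately show False using f(2)[of "\<sigma> i"] by simp
  qed
  then have "\<exists>f. \<forall>i. f i \<in> B \<and> f (Suc i) < f i"
    using b by (intro exI[of _ "b \<circ> \<sigma>"]) simp
  then show False using B unfolding well_ordered_set_iff_no_descending_chain by blast
qed

lemma finite_antidiagonal:
  fixes A B :: "'g::linordered_ab_group_add set"
  assumes A: "well_ordered_set A" and B: "well_ordered_set B"
  shows "finite {g \<in> A. x - g \<in> B}"
proof (rule ccontr)
  assume "infinite {g \<in> A. x - g \<in> B}"
  then obtain s :: "nat \<Rightarrow> 'g" where s: "inj s" "range s \<subseteq> {g \<in> A. x - g \<in> B}"
    using infinite_countable_subset by blast
  then obtain \<sigma> where \<sigma>: "strict_mono \<sigma>" "incseq (s \<circ> \<sigma>)"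
    using well_ordered_set_incseq_subseq[OF A, of s] by blast
  have "s (\<sigma> i) < s (\<sigma> (Suc i))" for i
    using incseq_SucD[OF \<sigma>(2), of i] inj_eq[OF s(1)] strict_mono_eq[OF \<sigma>(1)] by (auto simp: le_less)
  then have "\<exists>f. \<forall>i. f i \<in> B \<and> f (Suc i) < f i"
    using s(2) by (intro exI[of _ "\<lambda>i. x - s (\<sigma> i)"]) auto
  then show False using B unfolding well_ordered_set_iff_no_descending_chain by blast
qed

section \<open>Arithmetic of generalized power series\<close>

definition hmonom :: "'k::field \<Rightarrow> 'g::linordered_ab_group_add \<Rightarrow> ('g \<Rightarrow> 'k)" where
  "hmonom c \<gamma> = (\<lambda>g. if g = \<gamma> then c else 0)"

abbreviation K :: "('g::linordered_ab_group_add \<Rightarrow> 'k::field) set" where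
  "K \<equiv> hahn_field"

lemma hahn_field_iff: "a \<in> K \<longleftrightarrow> well_ordered_set (hsupp a)"
  by (simp add: hahn_field_def)

lemma hsupp_iff [simp]: "g \<in> hsupp a \<longleftrightarrow> a g \<noteq> 0"
  by (simp add: hsupp_def)

lemma hzero_apply [simp]: "hzero g = 0"
  by (simp add: hzero_def)

lemma hzero_iff: "a = hzero \<longleftrightarrow> (\<forall>g. a g = 0)"
  by (auto simp: hzero_def)

lemma hsub_eq_hzero_iff: "hsub a b = hzero \<longleftrightarrow> a = b"
  by (auto simp: hsub_def hzero_iff fun_eq_iff)

lemma hconst_eq_hmonom: "hconst c = hmonom c 0"
  by (simp add: hconst_def hmonom_def)

lemma hmonom_in [simp]: "hmonom c \<gamma> \<in> K"
  unfolding hahn_field_iff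
  by (rule well_ordered_set_finite, rule finite_subset[of _ "{\<gamma>}"])
    (auto simp: hmonom_def split: if_splits)

lemma hconst_0 [simp]: "hconst 0 = hzero"
  by (simp add: hconst_def hzero_def)

lemma hconst_in [simp]: "hconst c \<in> K"
  by (simp add: hconst_eq_hmonom)

lemma hone_in [simp]: "hone \<in> K"
  by (simp add: hone_def)

lemma hadd_in [simp]: "a \<in> K \<Longrightarrow> b \<in> K \<Longrightarrow> hadd a b \<in> K"
  unfolding hahn_field_iff
  by (rule well_ordered_set_subset[OF well_ordered_set_Un[of "hsupp a" "hsupp b"]])
    (auto simp: hadd_def)

lemma hsub_in [simp]: "a \<in> K \<Longrightarrow> b \<in> K \<Longrightarrow> hsub a b \<in> K"
  unfolding hahn_field_iff
  by (rule well_ordered_set_subset[OF well_ordered_set_Un[of "hsupp a" "hsupp b"]])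
    (auto simp: hsub_def)

lemma finite_hmult_index:
  "a \<in> K \<Longrightarrow> b \<in> K \<Longrightarrow> finite {g. a g \<noteq> 0 \<and> b (x - g) \<noteq> 0}"
  using finite_antidiagonal[of "hsupp a" "hsupp b" x] by (simp add: hahn_field_iff)

lemma hmult_eq_sum:
  assumes "finite F" "{g. a g \<noteq> 0 \<and> b (x - g) \<noteq> 0} \<subseteq> F"
  shows "hmult a b x = (\<Sum>g\<in>F. a g * b (x - g))"
  unfolding hmult_def by (rule sum.mono_neutral_left) (use assms in auto)

lemma hsupp_hmult: "hsupp (hmult a b) \<subseteq> hsupp a + hsupp b"
proof
  fix x assume "x \<in> hsupp (hmult a b)"
  have "{g. a g \<noteq> 0 \<and> b (x - g) \<noteq> 0} \<noteq> {}"
  proof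
    assume e: "{g. a g \<noteq> 0 \<and> b (x - g) \<noteq> 0} = {}"
    have "hmult a b x = 0" unfolding hmult_def e by simp
    with \<open>x \<in> hsupp (hmult a b)\<close> show False by simp
  qed
  then obtain g where "a g \<noteq> 0" "b (x - g) \<noteq> 0" by blast
  then show "x \<in> hsupp a + hsupp b"
    using set_plus_intro[of g "hsupp a" "x - g" "hsupp b"] by simp
qed

lemma hmult_in [simp]: "a \<in> K \<Longrightarrow> b \<in> K \<Longrightarrow> hmult a b \<in> K"
  unfolding hahn_field_iff by (rule well_ordered_set_subset[OF well_ordered_set_plus hsupp_hmult])

lemma hmult_commute: "hmult a b = hmult b a"
proof
  fix x
  show "hmult a b x = hmult b a x"
    unfolding hmult_def
    by (rule sum.reindex_bij_witness[of _ "\<lambda>g. x - g" "\<lambda>g. x - g"]) (auto simp: mult.commute)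
qed

lemma hmult_hadd_right:
  assumes "a \<in> K" "b \<in> K" "c \<in> K"
  shows "hmult a (hadd b c) = hadd (hmult a b) (hmult a c)"
proof
  fix x
  let ?F = "{g. a g \<noteq> 0 \<and> b (x - g) \<noteq> 0} \<union> {g. a g \<noteq> 0 \<and> c (x - g) \<noteq> 0}"
  have F: "finite ?F" using finite_hmult_index assms by blast
  have "hmult a (hadd b c) x = (\<Sum>g\<in>?F. a g * hadd b c (x - g))"
    by (rule hmult_eq_sum[OF F]) (auto simp: hadd_def)
  also have "\<dots> = hmult a b x + hmult a c x"
    by (simp add: hadd_def distrib_left sum.distrib hmult_eq_sum[OF F])
  finally show "hmult a (hadd b c) x = hadd (hmult a b) (hmult a c) x"
    by (simp add: hadd_def)
qed

lemma hmult_hsub_right: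
  assumes "a \<in> K" "b \<in> K" "c \<in> K"
  shows "hmult a (hsub b c) = hsub (hmult a b) (hmult a c)"
proof
  fix x
  let ?F = "{g. a g \<noteq> 0 \<and> b (x - g) \<noteq> 0} \<union> {g. a g \<noteq> 0 \<and> c (x - g) \<noteq> 0}"
  have F: "finite ?F" using finite_hmult_index assms by blast
  have "hmult a (hsub b c) x = (\<Sum>g\<in>?F. a g * hsub b c (x - g))"
    by (rule hmult_eq_sum[OF F]) (auto simp: hsub_def)
  also have "\<dots> = hmult a b x - hmult a c x"
    by (simp add: hsub_def right_diff_distrib sum_subtractf hmult_eq_sum[OF F])
  finally show "hmult a (hsub b c) x = hsub (hmult a b) (hmult a c) x"
    by (simp add: hsub_def)
qed

lemma hmult_hmonom: "hmult a (hmonom c \<gamma>) = (\<lambda>x. a (x - \<gamma>) * c)"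
proof
  fix x
  have "{g. a g \<noteq> 0 \<and> hmonom c \<gamma> (x - g) \<noteq> 0} = (if a (x - \<gamma>) * c = 0 then {} else {x - \<gamma>})"
    by (auto simp: hmonom_def)
  then show "hmult a (hmonom c \<gamma>) x = a (x - \<gamma>) * c"
    by (simp add: hmult_def hmonom_def split: if_splits)
qed

lemma hmult_hone [simp]: "hmult a hone = a"
  by (simp add: hone_def hconst_eq_hmonom hmult_hmonom)

lemma hmult_hzero [simp]: "hmult a hzero = hzero"
  by (simp add: hmult_def hzero_def)

lemma hmult_hmult_eq_sum:
  assumes a: "a \<in> K" and b: "b \<in> K" and c: "c \<in> K"
  shows "hmult a (hmult b c) x =
    (\<Sum>(g, h) \<in> {(g, h). a g \<noteq> 0 \<and> b h \<noteq> 0 \<and> c (x - g - h) \<noteq> 0}. a g * b h * c (x - g - h))"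
proof -
  define A where "A = {g \<in> hsupp a. x - g \<in> hsupp b + hsupp c}"
  define B where "B g = {h. b h \<noteq> 0 \<and> c (x - g - h) \<noteq> 0}" for g
  have A_fin: "finite A"
    unfolding A_def using a b c
    by (intro finite_antidiagonal well_ordered_set_plus) (simp_all add: hahn_field_iff)
  have B_fin: "finite (B g)" for g
    unfolding B_def using finite_hmult_index[OF b c] .
  have "hmult a (hmult b c) x = (\<Sum>g\<in>A. a g * hmult b c (x - g))"
    by (rule hmult_eq_sum[OF A_fin]) (use hsupp_hmult[of b c] in \<open>auto simp: A_def\<close>)
  also have "\<dots> = (\<Sum>g\<in>A. \<Sum>h\<in>B g. a g * b h * c (x - g - h))"
    by (simp add: hmult_def B_def sum_distrib_left mult.assoc)
  also have "\<dots> = (\<Sum>(g, h) \<in> Sigma A B. a g * b h * c (x - g - h))"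
    by (rule sum.Sigma[OF A_fin]) (use B_fin in blast)
  also have "Sigma A B = {(g, h). a g \<noteq> 0 \<and> b h \<noteq> 0 \<and> c (x - g - h) \<noteq> 0}"
  proof -
    have "x - g \<in> hsupp b + hsupp c" if "b h \<noteq> 0" "c (x - g - h) \<noteq> 0" for g h
      using that set_plus_intro[of h "hsupp b" "x - g - h" "hsupp c"] by simp
    then show ?thesis by (auto simp: A_def B_def)
  qed
  finally show ?thesis .
qed

lemma hmult_assoc:
  assumes "a \<in> K" "b \<in> K" "c \<in> K"
  shows "hmult (hmult a b) c = hmult a (hmult b c)"
proof
  fix x
  have "hmult (hmult a b) c x = hmult c (hmult b a) x"
    by (simp only: hmult_commute[of a b] hmult_commute[of "hmult b a" c])
  also have "\<dots> = (\<Sum>(g, h) \<in> {(g, h). c g \<noteq> 0 \<and> b h \<noteq> 0 \<and> a (x - g - h) \<noteq> 0}.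
      c g * b h * a (x - g - h))"
    using assms by (intro hmult_hmult_eq_sum)
  also have "\<dots> = (\<Sum>(g, h) \<in> {(g, h). a g \<noteq> 0 \<and> b h \<noteq> 0 \<and> c (x - g - h) \<noteq> 0}.
      a g * b h * c (x - g - h))"
    by (rule sum.reindex_bij_witness[of _ "\<lambda>(g, h). (x - g - h, h)" "\<lambda>(g, h). (x - g - h, h)"])
      (auto simp: algebra_simps)
  also have "\<dots> = hmult a (hmult b c) x"
    using assms by (intro hmult_hmult_eq_sum[symmetric])
  finally show "hmult (hmult a b) c x = hmult a (hmult b c) x" .
qed

section \<open>The canonical valuation\<close>

lemma hval_eqI:
  assumes "a \<gamma> \<noteq> 0" "\<And>g. g < \<gamma> \<Longrightarrow> a g = 0"
  shows "hval a = Fin \<gamma>"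
proof -
  have "(LEAST g. a g \<noteq> 0) = \<gamma>"
    by (rule Least_equality) (use assms in \<open>auto simp: not_less[symmetric]\<close>)
  moreover have "a \<noteq> hzero" using assms(1) by (auto simp: hzero_iff)
  ultimately show ?thesis by (simp add: hval_def)
qed

lemma hval_hzero [simp]: "hval hzero = Pinf"
  by (simp add: hval_def)

lemma hval_cases:
  assumes "a \<in> K"
  obtains "a = hzero"
    | \<gamma> where "hval a = Fin \<gamma>" "a \<gamma> \<noteq> 0" "\<And>g. g < \<gamma> \<Longrightarrow> a g = 0"
proof (cases "a = hzero")
  case True
  then show ?thesis by (rule that(1))
next
  case False
  then have "hsupp a \<noteq> {}" by (auto simp: hzero_iff)
  then obtain \<gamma> where "\<gamma> \<in> hsupp a" "\<forall>g\<in>hsupp a. \<gamma> \<le> g"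
    using assms unfolding hahn_field_iff well_ordered_set_def by blast
  then have "a \<gamma> \<noteq> 0" "\<And>g. g < \<gamma> \<Longrightarrow> a g = 0" by (auto dest: leD)
  then show ?thesis using that(2) hval_eqI by blast
qed

lemma hval_eq_Fin_iff:
  assumes "a \<in> K"
  shows "hval a = Fin \<gamma> \<longleftrightarrow> a \<gamma> \<noteq> 0 \<and> (\<forall>g<\<gamma>. a g = 0)"
  using hval_cases[OF assms] hval_eqI by (metis extended.distinct(1) extended.inject hval_hzero)

lemma Fin_le_hval_iff:
  assumes "a \<in> K"
  shows "Fin q \<le> hval a \<longleftrightarrow> (\<forall>g<q. a g = 0)"
  by (cases rule: hval_cases[OF assms]) (auto simp: not_le[symmetric])

lemma Fin_less_hval_iff:
  assumes "a \<in> K"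
  shows "Fin q < hval a \<longleftrightarrow> (\<forall>g\<le>q. a g = 0)"
  by (cases rule: hval_cases[OF assms]) (auto simp: not_le[symmetric])

lemma hval_eq_if_agree_upto:
  assumes "a \<in> K" "hval a = Fin \<gamma>" "\<And>g. g \<le> \<gamma> \<Longrightarrow> b g = a g"
  shows "hval b = Fin \<gamma>"
  using assms by (intro hval_eqI) (auto simp: hval_eq_Fin_iff)

lemma hval_eq_if_hadd_eq_hzero:
  assumes "hadd a b = hzero"
  shows "hval a = hval b"
proof -
  have "a g = - b g" for g
    using fun_cong[OF assms, of g] by (simp add: hadd_def eq_neg_iff_add_eq_0)
  then have "(\<lambda>g. a g \<noteq> 0) = (\<lambda>g. b g \<noteq> 0)" and "a = hzero \<longleftrightarrow> b = hzero"
    by (auto simp: hzero_iff)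
  then show ?thesis by (simp add: hval_def)
qed

lemma hval_hmonom: "c \<noteq> 0 \<Longrightarrow> hval (hmonom c \<gamma>) = Fin \<gamma>"
  by (rule hval_eqI) (auto simp: hmonom_def)

lemma hval_hconst: "c \<noteq> 0 \<Longrightarrow> hval (hconst c) = Fin 0"
  by (simp add: hconst_eq_hmonom hval_hmonom)

lemma hval_hone: "hval hone = Fin 0"
  by (simp add: hone_def hval_hconst)

lemma hval_hmult:
  assumes "a \<in> K" "b \<in> K" "hval a = Fin \<alpha>" "hval b = Fin \<beta>"
  shows "hval (hmult a b) = Fin (\<alpha> + \<beta>)"
proof -
  have a: "a \<alpha> \<noteq> 0" "\<And>g. a g \<noteq> 0 \<Longrightarrow> \<alpha> \<le> g"
    using assms(1,3) hval_eq_Fin_iff not_le by metis+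
  have b: "b \<beta> \<noteq> 0" "\<And>h. b h \<noteq> 0 \<Longrightarrow> \<beta> \<le> h"
    using assms(2,4) hval_eq_Fin_iff not_le by metis+
  have lower: "\<alpha> + \<beta> \<le> x" if "a g \<noteq> 0" "b (x - g) \<noteq> 0" for g x
    using add_mono[OF a(2) b(2), OF that] by simp
  have "g = \<alpha>" if "a g \<noteq> 0" "b (\<alpha> + \<beta> - g) \<noteq> 0" for g
    using a(2)[OF that(1)] b(2)[OF that(2)] by (simp add: le_diff_eq)
  then have single: "{g. a g \<noteq> 0 \<and> b (\<alpha> + \<beta> - g) \<noteq> 0} = {\<alpha>}"
    using a(1) b(1) by auto
  have empty: "{g. a g \<noteq> 0 \<and> b (x - g) \<noteq> 0} = {}" if "x < \<alpha> + \<beta>" for x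
    using lower that leD by blast
  show ?thesis
  proof (rule hval_eqI)
    show "hmult a b (\<alpha> + \<beta>) \<noteq> 0"
      unfolding hmult_def single using a(1) b(1) by simp
    show "hmult a b x = 0" if "x < \<alpha> + \<beta>" for x
      unfolding hmult_def empty[OF that] by simp
  qed
qed

lemma hval_hmult_gt:
  assumes "a \<in> K" "b \<in> K" "hval a = Fin q" "Fin 0 < hval b"
  shows "Fin q < hval (hmult a b)"
proof (cases rule: hval_cases[OF assms(2)])
  case 1
  then show ?thesis by simp
next
  case (2 \<beta>)
  then show ?thesis using hval_hmult[OF assms(1-3) 2(1)] assms(4) by simp
qed

lemma hval_hadd_ge:
  assumes "a \<in> K" "b \<in> K" "Fin q \<le> hval a" "Fin q \<le> hval b"
  shows "Fin q \<le> hval (hadd a b)"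
  using Fin_le_hval_iff[OF hadd_in[OF assms(1,2)]] Fin_le_hval_iff[OF assms(1)]
    Fin_le_hval_iff[OF assms(2)] assms(3,4)
  by (simp add: hadd_def)

lemma hval_hsub_ge:
  assumes "a \<in> K" "b \<in> K" "Fin q \<le> hval a" "Fin q \<le> hval b"
  shows "Fin q \<le> hval (hsub a b)"
  using Fin_le_hval_iff[OF hsub_in[OF assms(1,2)]] Fin_le_hval_iff[OF assms(1)]
    Fin_le_hval_iff[OF assms(2)] assms(3,4)
  by (simp add: hsub_def)

lemma hval_hadd_gt:
  assumes "a \<in> K" "b \<in> K" "Fin q < hval a" "Fin q < hval b"
  shows "Fin q < hval (hadd a b)"
  using Fin_less_hval_iff[OF hadd_in[OF assms(1,2)]] Fin_less_hval_iff[OF assms(1)]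
    Fin_less_hval_iff[OF assms(2)] assms(3,4)
  by (simp add: hadd_def)

lemma hval_hadd_eq_left:
  assumes "a \<in> K" "b \<in> K" "hval a = Fin \<alpha>" "Fin \<alpha> < hval b"
  shows "hval (hadd a b) = Fin \<alpha>"
proof (rule hval_eq_if_agree_upto[OF assms(1,3)])
  fix g assume "g \<le> \<alpha>"
  then show "hadd a b g = a g" using assms(4) Fin_less_hval_iff[OF assms(2)] by (simp add: hadd_def)
qed

lemma hval_hsub_eq_left:
  assumes "a \<in> K" "b \<in> K" "hval a = Fin \<alpha>" "Fin \<alpha> < hval b"
  shows "hval (hsub a b) = Fin \<alpha>"
proof (rule hval_eq_if_agree_upto[OF assms(1,3)])
  fix g assume "g \<le> \<alpha>"
  then show "hsub a b g = a g" using assms(4) Fin_less_hval_iff[OF assms(2)] by (simp add: hsub_def)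
qed

section \<open>Limits of successive approximations\<close>

lemma hahn_field_glue:
  assumes A: "A \<subseteq> K"
    and agree: "\<And>a b g. a \<in> A \<Longrightarrow> b \<in> A \<Longrightarrow> g < r a \<Longrightarrow> g < r b \<Longrightarrow> a g = b g"
  obtains u where "u \<in> K" "\<And>a g. a \<in> A \<Longrightarrow> g < r a \<Longrightarrow> u g = a g"
proof -
  define u where "u g = (if \<exists>a\<in>A. g < r a then (SOME a. a \<in> A \<and> g < r a) g else 0)" for g
  have u_eq: "u g = a g" if "a \<in> A" "g < r a" for a g
  proof -
    have "\<exists>a. a \<in> A \<and> g < r a" using that by blast
    then have "(SOME a. a \<in> A \<and> g < r a) \<in> A \<and> g < r (SOME a. a \<in> A \<and> g < r a)"
      by (rule someI_ex)
    then have "(SOME a. a \<in> A \<and> g < r a) g = a g"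
      using agree that by blast
    then show ?thesis using that by (auto simp: u_def)
  qed
  have "well_ordered_set (hsupp u)"
  proof (rule well_ordered_set_if_initial_segments)
    fix t assume "t \<in> hsupp u"
    then obtain a where a: "a \<in> A" "t < r a"
      unfolding u_def by (auto split: if_splits)
    have "{s \<in> hsupp u. s \<le> t} \<subseteq> hsupp a"
    proof
      fix s assume s: "s \<in> {s \<in> hsupp u. s \<le> t}"
      then have "s < r a" using a(2) by (auto intro: le_less_trans)
      then show "s \<in> hsupp a" using s u_eq[OF a(1)] by auto
    qed
    moreover have "well_ordered_set (hsupp a)" using A a(1) by (auto simp: hahn_field_iff)
    ultimately show "well_ordered_set {s \<in> hsupp u. s \<le> t}"
      by (rule well_ordered_set_subset[rotated])
  qed
  then show ?thesis using that u_eq by (simp add: hahn_field_iff)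
qed

text \<open>\<open>E x\<close> is the error of \<open>x\<close> as an approximate solution of \<open>E x = 0\<close>.\<close>

locale successive_approximation =
  fixes E :: "('g::linordered_ab_group_add \<Rightarrow> 'k::field) \<Rightarrow> ('g \<Rightarrow> 'k)"
    and \<mu> :: "'g \<Rightarrow> 'g"
  assumes strict_mono_\<mu>: "strict_mono \<mu>"
    and error_stable: "\<And>x f q. x \<in> K \<Longrightarrow> f \<in> K \<Longrightarrow> hval (E x) = Fin q \<Longrightarrow> hval f = Fin (\<mu> q)
      \<Longrightarrow> Fin q \<le> hval (E (hadd x f))"
    and error_improvable: "\<And>x q. x \<in> K \<Longrightarrow> hval (E x) = Fin q
      \<Longrightarrow> \<exists>f\<in>K. hval f = Fin (\<mu> q) \<and> Fin q < hval (E (hadd x f))"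
begin

definition improves :: "('g \<Rightarrow> 'k) \<Rightarrow> ('g \<Rightarrow> 'k) \<Rightarrow> bool" where
  "improves x y \<longleftrightarrow>
    (\<exists>q. hval (E x) = Fin q \<and> hval (hsub y x) = Fin (\<mu> q) \<and> hval (E x) < hval (E y))"

definition improves_or_eq :: "('g \<Rightarrow> 'k) \<Rightarrow> ('g \<Rightarrow> 'k) \<Rightarrow> bool" where
  "improves_or_eq x y \<longleftrightarrow> x = y \<or> improves x y"

lemma improves_trans:
  assumes "x \<in> K" "y \<in> K" "z \<in> K" "improves x y" "improves y z"
  shows "improves x z"
proof -
  obtain p where p: "hval (E x) = Fin p" "hval (hsub y x) = Fin (\<mu> p)" "hval (E x) < hval (E y)"
    using assms(4) by (auto simp: improves_def)
  obtain q where q: "hval (E y) = Fin q" "hval (hsub z y) = Fin (\<mu> q)" "hval (E y) < hval (E z)"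
    using assms(5) by (auto simp: improves_def)
  have "Fin (\<mu> p) < hval (hsub z y)"
    using p(1,3) q(1,2) strict_mono_\<mu> by (simp add: strict_mono_less)
  then have "hval (hadd (hsub y x) (hsub z y)) = Fin (\<mu> p)"
    using assms(1-3) p(2) by (intro hval_hadd_eq_left) simp_all
  moreover have "hadd (hsub y x) (hsub z y) = hsub z x" by (simp add: hadd_def hsub_def)
  ultimately show ?thesis
    using p(1,3) q(3) unfolding improves_def by (auto dest: less_trans)
qed

lemma improves_agree:
  assumes "x \<in> K" "y \<in> K" "improves x y" "hval (E x) = Fin q" "g < \<mu> q"
  shows "y g = x g"
proof -
  have "hval (hsub y x) = Fin (\<mu> q)" using assms(3,4) by (auto simp: improves_def)
  then have "hsub y x g = 0" using assms(1,2,5) by (simp add: hval_eq_Fin_iff)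
  then show ?thesis by (simp add: hsub_def)
qed

lemma improves_chain_upper_bound:
  assumes C: "C \<subseteq> K"
    and comparable: "\<And>a b. a \<in> C \<Longrightarrow> b \<in> C \<Longrightarrow> a = b \<or> improves a b \<or> improves b a"
    and unbounded: "\<And>a. a \<in> C \<Longrightarrow> \<exists>b\<in>C. improves a b"
  shows "\<exists>u\<in>K. \<forall>a\<in>C. improves a u"
proof -
  have "\<forall>a\<in>C. \<exists>q. hval (E a) = Fin q"
    using unbounded by (auto simp: improves_def)
  from bchoice[OF this] obtain q where q: "\<And>a. a \<in> C \<Longrightarrow> hval (E a) = Fin (q a)" by blast
  have CK: "a \<in> K" if "a \<in> C" for a using C that by blast
  have step: "hval (hsub b a) = Fin (\<mu> (q a))" "\<mu> (q a) < \<mu> (q b)"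
    if "a \<in> C" "b \<in> C" "improves a b" for a b
    using that q[OF that(1)] q[OF that(2)] strict_mono_\<mu>
    by (auto simp: improves_def strict_mono_less)
  have agree: "a g = b g" if "a \<in> C" "b \<in> C" "g < \<mu> (q a)" "g < \<mu> (q b)" for a b g
    using comparable[OF that(1,2)] improves_agree[of a b] improves_agree[of b a] q that CK by metis
  obtain u where u: "u \<in> K" "\<And>a g. a \<in> C \<Longrightarrow> g < \<mu> (q a) \<Longrightarrow> u g = a g"
  proof (rule hahn_field_glue[of C "\<lambda>a. \<mu> (q a)"])
    show "a g = b g" if "a \<in> C" "b \<in> C" "g < \<mu> (q a)" "g < \<mu> (q b)" for a b g
      using agree[OF that] .
  qed (use C that in auto)
  have hval_u: "hval (hsub u a) = Fin (\<mu> (q a))" if a: "a \<in> C" for a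
  proof -
    obtain b where b: "b \<in> C" "improves a b" using unbounded[OF a] by blast
    have "hsub u a g = hsub b a g" if "g \<le> \<mu> (q a)" for g
      using u(2)[OF b(1) le_less_trans[OF that step(2)[OF a b]]] by (simp add: hsub_def)
    then show ?thesis
      by (rule hval_eq_if_agree_upto[OF hsub_in[OF CK[OF b(1)] CK[OF a]] step(1)[OF a b]])
  qed
  have "improves a u" if a: "a \<in> C" for a
  proof -
    obtain b where b: "b \<in> C" "improves a b" using unbounded[OF a] by blast
    have "Fin (q b) \<le> hval (E (hadd b (hsub u b)))"
      using b(1) u(1) q[OF b(1)] hval_u[OF b(1)] by (intro error_stable) (auto simp: CK)
    moreover have "hadd b (hsub u b) = u" by (simp add: hadd_def hsub_def)
    moreover have "q a < q b" using q[OF a] q[OF b(1)] b(2) by (auto simp: improves_def)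
    ultimately have "Fin (q a) < hval (E u)"
      by (simp add: less_le_trans[of "Fin (q a)" "Fin (q b)"])
    then show ?thesis using q[OF a] hval_u[OF a] unfolding improves_def by simp
  qed
  then show ?thesis using u(1) by blast
qed

lemma partial_order_improves_or_eq: "partial_order_on K (relation_of improves_or_eq K)"
proof (rule partial_order_on_relation_ofI)
  show "improves_or_eq a c"
    if "a \<in> K" "b \<in> K" "c \<in> K" "improves_or_eq a b" "improves_or_eq b c" for a b c
    using that improves_trans[of a b c] unfolding improves_or_eq_def by blast
  show "a = b" if "improves_or_eq a b" "improves_or_eq b a" for a b
  proof (rule ccontr)
    assume "a \<noteq> b"
    then have "hval (E a) < hval (E b)" "hval (E b) < hval (E a)"
      using that unfolding improves_or_eq_def improves_def by auto
    then show False by simp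
  qed
qed (simp add: improves_or_eq_def)

lemma Chains_improves_or_eq_bounded:
  assumes "C \<in> Chains (relation_of improves_or_eq K)"
  shows "\<exists>u\<in>K. \<forall>a\<in>C. improves_or_eq a u"
proof -
  have C: "C \<subseteq> K"
    and comparable: "\<And>a b. a \<in> C \<Longrightarrow> b \<in> C \<Longrightarrow> improves_or_eq a b \<or> improves_or_eq b a"
    using assms unfolding Chains_def relation_of_def by auto
  show ?thesis
  proof (cases "\<exists>m\<in>C. \<forall>a\<in>C. improves_or_eq a m")
    case True
    then obtain m where "m \<in> C" "\<forall>a\<in>C. improves_or_eq a m" by blast
    then show ?thesis using C by blast
  next
    case False
    have "\<exists>b\<in>C. improves a b" if a: "a \<in> C" for a
    proof -
      obtain b where b: "b \<in> C" "\<not> improves_or_eq b a" using False a by blast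
      then have "a \<noteq> b" by (auto simp: improves_or_eq_def)
      with comparable[OF a b(1)] b(2) have "improves a b" by (simp add: improves_or_eq_def)
      with b(1) show ?thesis by blast
    qed
    then have "\<exists>u\<in>K. \<forall>a\<in>C. improves a u"
      by (intro improves_chain_upper_bound[OF C])
        (use comparable in \<open>auto simp: improves_or_eq_def\<close>)
    then show ?thesis unfolding improves_or_eq_def by blast
  qed
qed

theorem exists_exact_solution: "\<exists>x\<in>K. E x = hzero"
proof (rule ccontr)
  assume no_solution: "\<not> ?thesis"
  obtain m where m: "m \<in> K" "\<And>a. a \<in> K \<Longrightarrow> improves_or_eq m a \<Longrightarrow> a = m"
    using predicate_Zorn[OF partial_order_improves_or_eq Chains_improves_or_eq_bounded] by blast
  from no_solution m(1) obtain q where q: "hval (E m) = Fin q" by (auto simp: hval_def)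
  then obtain f where f: "f \<in> K" "hval f = Fin (\<mu> q)" "Fin q < hval (E (hadd m f))"
    using error_improvable[OF m(1)] by blast
  have "hsub (hadd m f) m = f" by (simp add: hadd_def hsub_def)
  with q f have "improves m (hadd m f)" unfolding improves_def by simp
  then have "hadd m f = m" using m f(1) unfolding improves_or_eq_def by simp
  then show False using f(3) q by simp
qed

end

section \<open>Inverses\<close>

lemma hsub_hmult_hadd:
  assumes "y \<in> K" "x \<in> K" "f \<in> K"
  shows "hsub c (hmult y (hadd x f)) = hsub (hsub c (hmult y x)) (hmult y f)"
  unfolding hmult_hadd_right[OF assms] by (simp add: hsub_def hadd_def algebra_simps)

lemma hval_hsub_hone_hmult_lead_inverse:
  assumes "y \<in> K" "hval y = Fin \<gamma>"
  shows "Fin 0 < hval (hsub hone (hmult y (hmonom (inverse (y \<gamma>)) (- \<gamma>))))"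
proof -
  have \<gamma>: "y \<gamma> \<noteq> 0" "\<And>g. g < \<gamma> \<Longrightarrow> y g = 0" using assms by (simp_all add: hval_eq_Fin_iff)
  have "hsub hone (hmult y (hmonom (inverse (y \<gamma>)) (- \<gamma>))) h = 0" if "h \<le> 0" for h
  proof -
    from that consider "h = 0" | "h + \<gamma> < \<gamma>" by fastforce
    then show ?thesis
      by cases (simp_all add: hmult_hmonom hsub_def hone_def hconst_def \<gamma>)
  qed
  then show ?thesis using assms(1) by (simp add: Fin_less_hval_iff)
qed

text \<open>Correcting an approximate inverse \<open>c\<close> of \<open>y\<close> by \<open>(1 - y c) m\<close>, where \<open>m\<close> inverts the leading
  term of \<open>y\<close>, multiplies the error \<open>1 - y c\<close> by \<open>1 - y m\<close>, which has positive valuation.\<close>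

lemma successive_approximation_inverse:
  fixes y :: "'g::linordered_ab_group_add \<Rightarrow> 'k::field"
  assumes y: "y \<in> K" "hval y = Fin \<gamma>"
  shows "successive_approximation (\<lambda>c. hsub hone (hmult y c)) (\<lambda>q. q - \<gamma>)"
proof (rule successive_approximation.intro)
  show "strict_mono (\<lambda>q. q - \<gamma>)" by (rule strict_monoI) simp
next
  fix x f :: "'g \<Rightarrow> 'k" and q
  assume x: "x \<in> K" and f: "f \<in> K" and q: "hval (hsub hone (hmult y x)) = Fin q"
    and vf: "hval f = Fin (q - \<gamma>)"
  have "hval (hmult y f) = Fin q" using hval_hmult[OF y(1) f y(2) vf] by simp
  then show "Fin q \<le> hval (hsub hone (hmult y (hadd x f)))"
    using x f y(1) q by (simp add: hsub_hmult_hadd hval_hsub_ge)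
next
  fix x :: "'g \<Rightarrow> 'k" and q
  assume x: "x \<in> K" and q: "hval (hsub hone (hmult y x)) = Fin q"
  define m where "m = hmonom (inverse (y \<gamma>)) (- \<gamma>)"
  define r where "r = hsub hone (hmult y x)"
  define f where "f = hmult r m"
  have m: "m \<in> K" "hval m = Fin (- \<gamma>)" "Fin 0 < hval (hsub hone (hmult y m))"
    using y hval_hsub_hone_hmult_lead_inverse[OF y]
    by (simp_all add: m_def hval_hmonom hval_eq_Fin_iff)
  have r: "r \<in> K" "hval r = Fin q" using x y(1) q by (simp_all add: r_def)
  have f: "f \<in> K" "hval f = Fin (q - \<gamma>)"
    using r m hval_hmult[OF r(1) m(1) r(2) m(2)] by (simp_all add: f_def)
  have "hsub hone (hmult y (hadd x f)) = hsub r (hmult y f)"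
    using y(1) x f(1) by (simp add: hsub_hmult_hadd r_def)
  also have "hmult y f = hmult r (hmult y m)"
    unfolding f_def by (metis hmult_assoc hmult_commute r(1) m(1) y(1))
  also have "hsub r (hmult r (hmult y m)) = hmult r (hsub hone (hmult y m))"
    using hmult_hsub_right[OF r(1) hone_in hmult_in[OF y(1) m(1)]] by simp
  finally have "hsub hone (hmult y (hadd x f)) = hmult r (hsub hone (hmult y m))" .
  moreover have "Fin q < hval (hmult r (hsub hone (hmult y m)))"
    using y(1) m(1,3) r by (intro hval_hmult_gt) simp_all
  ultimately show "\<exists>f\<in>K. hval f = Fin (q - \<gamma>) \<and> Fin q < hval (hsub hone (hmult y (hadd x f)))"
    using f by auto
qed

lemma hmult_right_inverse_exists:
  assumes "y \<in> K" "y \<noteq> hzero"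
  shows "\<exists>c\<in>K. hmult y c = hone"
proof -
  obtain \<gamma> where "hval y = Fin \<gamma>" using assms by (auto simp: hval_def)
  note approximation = successive_approximation_inverse[OF assms(1) this]
  from successive_approximation.exists_exact_solution[OF approximation]
  obtain c where "c \<in> K" "hsub hone (hmult y c) = hzero" by blast
  then show ?thesis by (metis hsub_eq_hzero_iff)
qed

lemma hmult_inverse_unique:
  assumes "y \<in> K" "c \<in> K" "c' \<in> K" "hmult y c = hone" "hmult y c' = hone"
  shows "c = c'"
proof -
  have "c = hmult c (hmult y c')" using assms(5) by simp
  also have "\<dots> = hmult (hmult y c) c'" using assms(1-3) by (metis hmult_assoc hmult_commute)
  also have "\<dots> = c'" using assms(4) by (metis hmult_commute hmult_hone)
  finally show ?thesis .
qed

lemma hinverse: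
  assumes "y \<in> K" "y \<noteq> hzero"
  shows hinverse_in: "hinverse y \<in> K" and hmult_hinverse: "hmult y (hinverse y) = hone"
proof -
  have "\<exists>!c. c \<in> K \<and> hmult y c = hone"
    using hmult_right_inverse_exists[OF assms] hmult_inverse_unique[OF assms(1)] by blast
  then have "hinverse y \<in> K \<and> hmult y (hinverse y) = hone"
    unfolding hinverse_def by (rule theI')
  then show "hinverse y \<in> K" "hmult y (hinverse y) = hone" by auto
qed

lemma hval_hinverse:
  assumes "y \<in> K" "hval y = Fin \<gamma>"
  shows "hval (hinverse y) = Fin (- \<gamma>)"
proof -
  have y: "y \<noteq> hzero" using assms(2) by auto
  have "hinverse y \<noteq> hzero"
    using hmult_hinverse[OF assms(1) y] hval_hone
    by (metis hmult_hzero hval_hzero extended.distinct(1))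
  then obtain \<delta> where \<delta>: "hval (hinverse y) = Fin \<delta>"
    using hval_cases[OF hinverse_in[OF assms(1) y]] by metis
  have "Fin (\<gamma> + \<delta>) = Fin 0"
    using hval_hmult[OF assms(1) hinverse_in[OF assms(1) y] assms(2) \<delta>]
    by (simp add: hmult_hinverse[OF assms(1) y] hval_hone)
  then show ?thesis using \<delta> by (simp add: eq_neg_iff_add_eq_0 add.commute)
qed

lemma hval_hdivide:
  assumes "a \<in> K" "b \<in> K" "hval a = Fin \<alpha>" "hval b = Fin \<beta>"
  shows "hval (hdivide a b) = Fin (\<alpha> - \<beta>)"
proof -
  have "b \<noteq> hzero" using assms(4) by auto
  then show ?thesis
    using hval_hmult[OF assms(1) hinverse_in assms(3) hval_hinverse[OF assms(2,4)]] assms(2)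
    by (simp add: hdivide_def)
qed

section \<open>Integration under a differential valuation\<close>

lemma admits_asymptotic_integration_if_admits_integration:
  fixes D :: "('g::linordered_ab_group_add \<Rightarrow> 'k::field) \<Rightarrow> ('g \<Rightarrow> 'k)"
  assumes "admits_integration D"
  shows "admits_asymptotic_integration D"
  unfolding admits_asymptotic_integration_def
proof (intro ballI impI)
  fix b :: "'g \<Rightarrow> 'k" assume "b \<in> K" "b \<noteq> hzero"
  moreover obtain a where "a \<in> K" "D a = b"
    using assms \<open>b \<in> K\<close> unfolding admits_integration_def by blast
  ultimately show "\<exists>a\<in>K. hval b < hval (hsub b (D a))"
    by (intro bexI[of _ a]) (simp_all add: hval_def hsub_eq_hzero_iff)
qed

locale hahn_differential =
  fixes D :: "('g::linordered_ab_group_add \<Rightarrow> 'k::field) \<Rightarrow> ('g \<Rightarrow> 'k)"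
  assumes derivation: "is_derivation D"
    and constants_eq: "constants D = range hconst"
    and differential_valuation: "differential_valuation D"
begin

lemma D_in [simp]: "a \<in> K \<Longrightarrow> D a \<in> K"
  using derivation by (simp add: is_derivation_def)

lemma D_hadd: "a \<in> K \<Longrightarrow> b \<in> K \<Longrightarrow> D (hadd a b) = hadd (D a) (D b)"
  using derivation by (simp add: is_derivation_def)

lemma D_hmult: "a \<in> K \<Longrightarrow> b \<in> K \<Longrightarrow> D (hmult a b) = hadd (hmult a (D b)) (hmult b (D a))"
  using derivation by (simp add: is_derivation_def)

lemma D_hsub:
  assumes "a \<in> K" "b \<in> K"
  shows "D (hsub a b) = hsub (D a) (D b)"
proof -
  have "D a = D (hadd (hsub a b) b)" by (simp add: hadd_def hsub_def)
  also have "\<dots> = hadd (D (hsub a b)) (D b)" using assms by (simp add: D_hadd)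
  finally show ?thesis by (simp add: hadd_def hsub_def)
qed

lemma hsub_D_hadd:
  assumes "x \<in> K" "f \<in> K"
  shows "hsub b (D (hadd x f)) = hsub (hsub b (D x)) (D f)"
  unfolding D_hadd[OF assms] by (simp add: hsub_def hadd_def algebra_simps)

lemma D_eq_hzero_iff: "a \<in> K \<Longrightarrow> D a = hzero \<longleftrightarrow> a \<in> range hconst"
  using constants_eq by (auto simp: constants_def)

lemma D_hconst [simp]: "D (hconst c) = hzero"
  by (simp add: D_eq_hzero_iff)

lemma hval_D_finite:
  assumes "a \<in> K" "hval a = Fin \<gamma>" "\<gamma> \<noteq> 0"
  obtains d where "hval (D a) = Fin d"
proof -
  have "a \<notin> range hconst"
  proof
    assume "a \<in> range hconst"
    then obtain c where "a = hconst c" by blast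
    with assms(2,3) show False by (cases "c = 0") (simp_all add: hval_hconst)
  qed
  then have "D a \<noteq> hzero" using assms(1) by (simp add: D_eq_hzero_iff)
  then show ?thesis using that by (auto simp: hval_def)
qed

lemma hval_hdivide_D_pos:
  assumes "a \<in> K" "b \<in> K" "Fin 0 \<le> hval a" "Fin 0 < hval b" "b \<noteq> hzero"
  shows "Fin 0 < hval (hdivide (hmult b (D a)) (D b))"
  using differential_valuation assms unfolding differential_valuation_def by blast

lemma hval_D_hinverse:
  assumes "y \<in> K" "hval y = Fin \<gamma>" "hval (D y) = Fin d"
  shows "hval (D (hinverse y)) = Fin (d - \<gamma> - \<gamma>)"
proof -
  have "y \<noteq> hzero" using assms(2) by auto
  note z = hinverse_in[OF assms(1) this] hval_hinverse[OF assms(1,2)]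
    hmult_hinverse[OF assms(1) this]
  have "hadd (hmult y (D (hinverse y))) (hmult (hinverse y) (D y)) = hzero"
    using D_hmult[OF assms(1) z(1)] z(3) by (simp add: hone_def)
  then have "hval (hmult y (D (hinverse y))) = hval (hmult (hinverse y) (D y))"
    by (rule hval_eq_if_hadd_eq_hzero)
  also have "\<dots> = Fin (- \<gamma> + d)"
    using hval_hmult[OF z(1) D_in[OF assms(1)] z(2) assms(3)] .
  finally have yDz: "hval (hmult y (D (hinverse y))) = Fin (- \<gamma> + d)" .
  then have "D (hinverse y) \<noteq> hzero" by auto
  then obtain \<zeta> where \<zeta>: "hval (D (hinverse y)) = Fin \<zeta>" by (auto simp: hval_def)
  have "Fin (\<gamma> + \<zeta>) = Fin (- \<gamma> + d)"
    using hval_hmult[OF assms(1) D_in[OF z(1)] assms(2) \<zeta>] yDz by simp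
  then show ?thesis using \<zeta> by (simp add: algebra_simps)
qed

text \<open>For \<open>v y > 0\<close> this is the differential valuation axiom; for \<open>v y < 0\<close> apply the axiom
  to \<open>1/y\<close>.\<close>

lemma hval_D_less_hval_hmult_D:
  assumes y: "y \<in> K" "hval y = Fin \<gamma>" "\<gamma> \<noteq> 0" "hval (D y) = Fin d"
    and w: "w \<in> K" "Fin 0 \<le> hval w"
  shows "Fin d < hval (hmult y (D w))"
proof (cases rule: hval_cases[OF D_in[OF w(1)]])
  case 1
  then show ?thesis by simp
next
  case (2 \<omega>)
  have pos: "e < \<beta> + \<omega>" if z: "z \<in> K" "hval z = Fin \<beta>" "0 < \<beta>" "hval (D z) = Fin e" for z \<beta> e
  proof -
    have "z \<noteq> hzero" using z(2) by auto
    then have "Fin 0 < hval (hdivide (hmult z (D w)) (D z))"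
      using hval_hdivide_D_pos[OF w(1) z(1) w(2)] z(2,3) by simp
    also have "hval (hdivide (hmult z (D w)) (D z)) = Fin (\<beta> + \<omega> - e)"
      using hval_hdivide[OF _ _ hval_hmult[OF z(1) _ z(2) 2(1)] z(4)] z(1) w(1) by simp
    finally show ?thesis by simp
  qed
  have "d < \<gamma> + \<omega>"
  proof (cases "0 < \<gamma>")
    case True
    show ?thesis by (rule pos[OF y(1,2) True y(4)])
  next
    case False
    with y(3) have "0 < - \<gamma>" by simp
    have "y \<noteq> hzero" using y(2) by auto
    from pos[OF hinverse_in[OF y(1) this] hval_hinverse[OF y(1,2)] \<open>0 < - \<gamma>\<close>
        hval_D_hinverse[OF y(1,2,4)]]
    show ?thesis by (simp add: algebra_simps)
  qed
  then show ?thesis using hval_hmult[OF y(1) D_in[OF w(1)] y(2) 2(1)] by simp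
qed

lemma hval_D_mono:
  assumes y: "y \<in> K" "hval y = Fin \<gamma>" "\<gamma> \<noteq> 0" "hval (D y) = Fin d"
    and z: "z \<in> K" "hval z = Fin \<delta>" "\<gamma> \<le> \<delta>"
  shows "Fin d \<le> hval (D z)" and "\<gamma> < \<delta> \<Longrightarrow> Fin d < hval (D z)"
proof -
  have "y \<noteq> hzero" using y(2) by auto
  note y_inv = hinverse_in[OF y(1) this] hmult_hinverse[OF y(1) this]
  define w where "w = hmult z (hinverse y)"
  have w: "w \<in> K" "hval w = Fin (\<delta> - \<gamma>)"
    using hval_hmult[OF z(1) y_inv(1) z(2) hval_hinverse[OF y(1,2)]] z(1) y_inv(1)
    by (simp_all add: w_def)
  have "z = hmult y w"
    unfolding w_def by (metis hmult_assoc hmult_commute hmult_hone y(1) z(1) y_inv)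
  then have Dz: "D z = hadd (hmult y (D w)) (hmult w (D y))"
    using D_hmult[OF y(1) w(1)] by simp
  have small: "Fin d < hval (hmult y (D w))"
    using hval_D_less_hval_hmult_D[OF y w(1)] w(2) z(3) by simp
  have main: "hval (hmult w (D y)) = Fin (\<delta> - \<gamma> + d)"
    using hval_hmult[OF w(1) D_in[OF y(1)] w(2) y(4)] .
  show "Fin d \<le> hval (D z)"
    unfolding Dz using small main z(3) w(1) y(1) by (intro hval_hadd_ge) simp_all
  show "Fin d < hval (D z)" if "\<gamma> < \<delta>"
    unfolding Dz using small main that w(1) y(1) by (intro hval_hadd_gt) simp_all
qed

text \<open>\<open>dval \<gamma>\<close> is the valuation of the derivative of any element of valuation \<open>\<gamma> \<noteq> 0\<close>
  (the map \<open>\<gamma> \<mapsto> \<gamma>'\<close> of the asymptotic couple); its value at \<open>0\<close> is irrelevant.\<close>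

definition dval :: "'g \<Rightarrow> 'g" where
  "dval \<gamma> = (case hval (D (hmonom (1::'k) \<gamma>)) of Fin d \<Rightarrow> d)"

lemma hval_D_hmonom:
  assumes "\<gamma> \<noteq> 0"
  shows "hval (D (hmonom (1::'k) \<gamma>)) = Fin (dval \<gamma>)"
proof -
  obtain d where "hval (D (hmonom (1::'k) \<gamma>)) = Fin d"
    using hval_D_finite[OF hmonom_in hval_hmonom[OF one_neq_zero] assms] .
  then show ?thesis by (simp add: dval_def)
qed

lemma hval_D_eq_dval:
  assumes "a \<in> K" "hval a = Fin \<gamma>" "\<gamma> \<noteq> 0"
  shows "hval (D a) = Fin (dval \<gamma>)"
proof -
  note t = hmonom_in[of "1::'k" \<gamma>] hval_hmonom[OF one_neq_zero, of \<gamma>] hval_D_hmonom[OF assms(3)]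
  obtain d where d: "hval (D a) = Fin d" using hval_D_finite[OF assms] .
  have "Fin (dval \<gamma>) \<le> Fin d"
    using hval_D_mono(1)[OF t(1,2) assms(3) t(3) assms(1,2) order_refl] d by simp
  moreover have "Fin d \<le> Fin (dval \<gamma>)"
    using hval_D_mono(1)[OF assms d t(1,2) order_refl] t(3) by simp
  ultimately show ?thesis using d by simp
qed

lemma strict_mono_on_dval: "strict_mono_on (- {0}) dval"
proof (rule strict_mono_onI)
  fix \<gamma> \<delta> :: 'g assume "\<gamma> \<in> - {0}" "\<delta> \<in> - {0}" and less: "\<gamma> < \<delta>"
  then have \<gamma>: "\<gamma> \<noteq> 0" and \<delta>: "\<delta> \<noteq> 0" by auto
  have "Fin (dval \<gamma>) < hval (D (hmonom (1::'k) \<delta>))"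
    by (rule hval_D_mono(2)[OF hmonom_in hval_hmonom[OF one_neq_zero] \<gamma> hval_D_hmonom[OF \<gamma>]
          hmonom_in hval_hmonom[OF one_neq_zero] less_imp_le[OF less] less])
  then show "dval \<gamma> < dval \<delta>" by (simp add: hval_D_hmonom[OF \<delta>])
qed

lemma inv_into_dval: "\<gamma> \<noteq> 0 \<Longrightarrow> inv_into (- {0}) dval (dval \<gamma>) = \<gamma>"
  using inv_into_f_f[OF strict_mono_on_imp_inj_on[OF strict_mono_on_dval]] by simp

context
  assumes asymptotic: "admits_asymptotic_integration D"
begin

lemma asymptotic_integral_nonconstant:
  assumes r: "r \<in> K" "hval r = Fin q"
  shows "\<exists>f\<in>K. \<exists>\<gamma>. hval f = Fin \<gamma> \<and> \<gamma> \<noteq> 0 \<and> dval \<gamma> = q \<and> Fin q < hval (hsub r (D f))"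
proof -
  have "r \<noteq> hzero" using r(2) by auto
  then obtain a where a: "a \<in> K" "hval r < hval (hsub r (D a))"
    using asymptotic r(1) unfolding admits_asymptotic_integration_def by blast
  have "hval (hsub r (hsub r (D a))) = Fin q" using a r by (intro hval_hsub_eq_left) simp_all
  moreover have "hsub r (hsub r (D a)) = D a" by (simp add: hsub_def)
  ultimately have Da: "hval (D a) = Fin q" by simp
  \<comment> \<open>dropping the constant term keeps the derivative and makes the valuation nonzero\<close>
  define f where "f = hsub a (hconst (a 0))"
  have f: "f \<in> K" "D f = D a"
    using a(1) by (simp_all add: f_def D_hsub) (simp add: hsub_def)
  with Da have "D f \<noteq> hzero" by auto
  then have "f \<noteq> hzero" using D_hconst[of 0] by auto
  then obtain \<gamma> where \<gamma>: "hval f = Fin \<gamma>" "f \<gamma> \<noteq> 0"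
    by (cases rule: hval_cases[OF f(1)]) auto
  have "\<gamma> \<noteq> 0" using \<gamma>(2) by (auto simp: f_def hsub_def hconst_def)
  moreover have "dval \<gamma> = q" using hval_D_eq_dval[OF f(1) \<gamma>(1) \<open>\<gamma> \<noteq> 0\<close>] f(2) Da by simp
  moreover have "Fin q < hval (hsub r (D f))" using a(2) r(2) f(2) by simp
  ultimately show ?thesis using f(1) \<gamma>(1) by blast
qed

lemma dval_surj: "dval ` (- {0}) = UNIV"
proof -
  have "q \<in> dval ` (- {0})" for q
    using asymptotic_integral_nonconstant[OF hmonom_in hval_hmonom[OF one_neq_zero, of q]] by blast
  then show ?thesis by blast
qed

lemma inv_into_dval_neq_0: "inv_into (- {0}) dval q \<noteq> 0"
  using inv_into_into[of q dval "- {0}"] dval_surj by auto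

lemma dval_inv_into: "dval (inv_into (- {0}) dval q) = q"
  using f_inv_into_f[of q dval "- {0}"] dval_surj by auto

lemma strict_mono_inv_into_dval: "strict_mono (inv_into (- {0}) dval)"
proof (rule strict_monoI)
  fix p q :: 'g assume "p < q"
  then show "inv_into (- {0}) dval p < inv_into (- {0}) dval q"
    using strict_mono_on_less[OF strict_mono_on_dval,
        of "inv_into (- {0}) dval p" "inv_into (- {0}) dval q"]
      inv_into_dval_neq_0 dval_inv_into by simp
qed

lemma successive_approximation_integral:
  assumes b: "b \<in> K"
  shows "successive_approximation (\<lambda>a. hsub b (D a)) (inv_into (- {0}) dval)"
proof (rule successive_approximation.intro)
  show "strict_mono (inv_into (- {0}) dval)" by (rule strict_mono_inv_into_dval)
next
  fix x f :: "'g \<Rightarrow> 'k" and q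
  assume x: "x \<in> K" and f: "f \<in> K" and q: "hval (hsub b (D x)) = Fin q"
    and vf: "hval f = Fin (inv_into (- {0}) dval q)"
  have "hval (D f) = Fin q"
    using hval_D_eq_dval[OF f vf inv_into_dval_neq_0] dval_inv_into by simp
  then show "Fin q \<le> hval (hsub b (D (hadd x f)))"
    using b x f q by (simp add: hsub_D_hadd hval_hsub_ge)
next
  fix x :: "'g \<Rightarrow> 'k" and q
  assume x: "x \<in> K" and q: "hval (hsub b (D x)) = Fin q"
  obtain f \<gamma> where f: "f \<in> K" "hval f = Fin \<gamma>" "\<gamma> \<noteq> 0" "dval \<gamma> = q"
    "Fin q < hval (hsub (hsub b (D x)) (D f))"
    using asymptotic_integral_nonconstant[OF hsub_in[OF b D_in[OF x]] q] by blast
  then show "\<exists>f\<in>K. hval f = Fin (inv_into (- {0}) dval q) \<and> Fin q < hval (hsub b (D (hadd x f)))"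
    using x inv_into_dval[OF f(3)] by (auto simp: hsub_D_hadd)
qed

lemma admits_integration_if_admits_asymptotic_integration: "admits_integration D"
  unfolding admits_integration_def
proof
  fix b :: "'g \<Rightarrow> 'k" assume "b \<in> K"
  note approximation = successive_approximation_integral[OF this]
  from successive_approximation.exists_exact_solution[OF approximation]
  obtain a where "a \<in> K" "hsub b (D a) = hzero" by blast
  then show "\<exists>a\<in>K. D a = b" by (metis hsub_eq_hzero_iff)
qed

end

end

theorem mainTheorem6:
  fixes D :: "('g::linordered_ab_group_add \<Rightarrow> 'k::field) \<Rightarrow> ('g \<Rightarrow> 'k)"
  assumes "is_derivation D"
    and "constants D = range hconst"
    and "differential_valuation D"
  shows "admits_integration D \<longleftrightarrow> admits_asymptotic_integration D"
proof -
  interpret hahn_differential D using assms by unfold_locales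
  show ?thesis
    using admits_integration_if_admits_asymptotic_integration
      admits_asymptotic_integration_if_admits_integration by blast
qed

end
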